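(* Let $M\subset X$ be nonempty, $F:X\rightrightarrows Y$ with nonempty values, and $\bar x\in M\cap M'$ such that $F(\bar x)$ is $K$-sequentially compact and $\bar x$ is a local ideal minimum for $F$ on $M$. Suppose there are $e\in K\setminus\{0\}$, $r>0$, $\ell>0$ such that for all $u\in(X\setminus M)\cap B(\bar x,r)$ and $v\in M\cap B(\bar x,r)$, $$F(u)+\ell\|u-v\|e\subset F(v)+K.$$ Then $\bar x$ is a local ideal minimum on $X$ (i.e., without constraints) for the set-valued map $G:X\rightrightarrows Y$, $G(x)=F(x)+\ell d_M(x)e$.
   Context: $X,Y$ are real normed spaces, $K\subset Y$ a pointed closed convex cone, $B(x,r)$ the open ball, $M'$ the set of accumulation points of $M$, $d_M(x)=\inf_{m\in M}\|x-m\|$. A nonempty $A\subset Y$ is $K$-sequentially compact if for every $(a_n)\subset A$ there is $(c_n)\subset K$ such that $(a_n-c_n)$ has a subsequence converging to an element of $A$. For nonempty $S\subset X$, $\bar x\in S$ is a local ideal minimum for $F$ on $S$ if there is $\varepsilon>0$ such that $F(\bar x)\not\subset F(x)+(Y\setminus -K)$ for all $x\in S\cap B(\bar x,\varepsilon)\setminus\{\bar x\}$; "on $X$" means $S=X$. *)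

theory Defs
  imports "HOL-Analysis.Analysis"
begin

definition pointed_closed_convex_cone :: "'b::real_normed_vector set \<Rightarrow> bool" where
  "pointed_closed_convex_cone K \<longleftrightarrow>
     K \<noteq> {} \<and> cone K \<and> convex K \<and> closed K \<and> K \<inter> uminus ` K = {0}"

definition setplus :: "'b::real_normed_vector set \<Rightarrow> 'b set \<Rightarrow> 'b set" where
  "setplus A B = {a + b | a b. a \<in> A \<and> b \<in> B}"

definition K_seq_compact :: "'b::real_normed_vector set \<Rightarrow> 'b set \<Rightarrow> bool" where
  "K_seq_compact K A \<longleftrightarrow> A \<noteq> {} \<and>
     (\<forall>a::nat \<Rightarrow> 'b. (\<forall>n. a n \<in> A) \<longrightarrow>
        (\<exists>c::nat \<Rightarrow> 'b. (\<forall>n. c n \<in> K) \<and>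
           (\<exists>s y. strict_mono s \<and> y \<in> A \<and> ((\<lambda>n. a (s n) - c (s n)) \<longlonglongrightarrow> y))))"

definition local_ideal_min ::
  "'b::real_normed_vector set \<Rightarrow> ('a::real_normed_vector \<Rightarrow> 'b set) \<Rightarrow> 'a set \<Rightarrow> 'a \<Rightarrow> bool" where
  "local_ideal_min K F S xbar \<longleftrightarrow> xbar \<in> S \<and>
     (\<exists>\<epsilon>>0. \<forall>x \<in> S \<inter> ball xbar \<epsilon> - {xbar}.
        \<not> (F xbar \<subseteq> setplus (F x) (UNIV - uminus ` K)))"

end

theory Submission
  imports Defs
begin

text \<open>For a point \<open>x\<close> outside \<open>M\<close> near \<open>x\<^sub>0\<close>, pick points \<open>v\<^sub>n \<in> M\<close> near \<open>x\<^sub>0\<close>, different from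
  \<open>x\<^sub>0\<close>, with \<open>\<parallel>x - v\<^sub>n\<parallel> \<rightarrow> d\<^sub>M(x)\<close>; this is possible because \<open>x\<^sub>0\<close> is an accumulation point
  of \<open>M\<close>. Local minimality of \<open>x\<^sub>0\<close> on \<open>M\<close> gives \<open>y\<^sub>n \<in> F(x\<^sub>0)\<close> with \<open>F(v\<^sub>n) \<subseteq> y\<^sub>n + K\<close>, and the
  penalty hypothesis gives \<open>F(x) + \<ell>\<parallel>x - v\<^sub>n\<parallel>e \<subseteq> y\<^sub>n + K\<close>. By \<open>K\<close>-sequential compactness
  some \<open>y\<^sub>n - c\<^sub>n\<close> with \<open>c\<^sub>n \<in> K\<close> converge along a subsequence to \<open>y \<in> F(x\<^sub>0)\<close>, and closedness of
  \<open>K\<close> yields \<open>G(x) = F(x) + \<ell> d\<^sub>M(x) e \<subseteq> y + K\<close>, i.e. \<open>G(x\<^sub>0) \<not>\<subseteq> G(x) + (Y \<setminus> -K)\<close>.\<close>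

lemma notin_setplus_compl_uminus_iff:
  "y \<notin> setplus A (UNIV - uminus ` K) \<longleftrightarrow> (\<forall>a\<in>A. a - y \<in> K)"
proof
  assume y: "y \<notin> setplus A (UNIV - uminus ` K)"
  show "\<forall>a\<in>A. a - y \<in> K"
  proof (rule ballI, rule ccontr)
    fix a assume "a \<in> A" "a - y \<notin> K"
    have "y - a \<notin> uminus ` K"
    proof
      assume "y - a \<in> uminus ` K"
      then obtain k where "k \<in> K" "y - a = - k"
        by blast
      then have "a - y \<in> K"
        by (metis minus_diff_eq minus_minus)
      with \<open>a - y \<notin> K\<close> show False by contradiction
    qed
    with \<open>a \<in> A\<close> have "y \<in> setplus A (UNIV - uminus ` K)"
      unfolding setplus_def by (intro CollectI exI[of _ a] exI[of _ "y - a"]) auto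
    with y show False by contradiction
  qed
next
  assume dom: "\<forall>a\<in>A. a - y \<in> K"
  show "y \<notin> setplus A (UNIV - uminus ` K)"
  proof
    assume "y \<in> setplus A (UNIV - uminus ` K)"
    then obtain a w where "a \<in> A" "w \<notin> uminus ` K" "y = a + w"
      unfolding setplus_def by blast
    moreover from dom \<open>a \<in> A\<close> have "- (a - y) \<in> uminus ` K"
      by blast
    ultimately show False by simp
  qed
qed

lemma local_ideal_min_iff:
  "local_ideal_min K F S x0 \<longleftrightarrow> x0 \<in> S \<and>
     (\<exists>\<epsilon>>0. \<forall>x \<in> S \<inter> ball x0 \<epsilon> - {x0}. \<exists>y\<in>F x0. \<forall>f\<in>F x. f - y \<in> K)"
  by (simp add: local_ideal_min_def subset_iff notin_setplus_compl_uminus_iff Bex_def)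

lemma infdist_minimizing_sequence:
  fixes x :: "'a::metric_space"
  assumes "A \<noteq> {}"
  obtains a where "\<And>n. a n \<in> A" "(\<lambda>n. dist x (a n)) \<longlonglongrightarrow> infdist x A"
proof -
  have "\<exists>a\<in>A. dist x a < infdist x A + 1 / Suc n" for n
    using setdist_ltE[of "{x}" A "infdist x A + 1 / Suc n"] assms
    by (auto simp: infdist_eq_setdist)
  then obtain a where a: "\<And>n. a n \<in> A" "\<And>n. dist x (a n) < infdist x A + 1 / Suc n"
    by metis
  have upper: "(\<lambda>n. infdist x A + 1 / Suc n) \<longlonglongrightarrow> infdist x A"
    using tendsto_add[OF tendsto_const LIMSEQ_inverse_real_of_nat]
    by (simp add: inverse_eq_divide)
  have "(\<lambda>n. dist x (a n)) \<longlonglongrightarrow> infdist x A"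
    by (rule real_tendsto_sandwich[OF _ _ tendsto_const upper])
      (use a in \<open>auto intro: always_eventually infdist_le less_imp_le\<close>)
  with a(1) show thesis by (rule that)
qed

lemma infdist_remove_limpt:
  fixes x :: "'a::metric_space"
  assumes "x0 islimpt M"
  shows "infdist x (M - {x0}) = infdist x M"
proof -
  have "M \<subseteq> closure (M - {x0})"
  proof
    fix z assume "z \<in> M"
    then show "z \<in> closure (M - {x0})"
      using assms closure_subset[of "M - {x0}"] by (cases "z = x0") (auto simp: islimpt_in_closure)
  qed
  moreover have "M - {x0} \<noteq> {}"
    using assms by (metis closure_empty empty_iff islimpt_in_closure)
  ultimately show ?thesis
    using setdist_subset_right[of "M - {x0}" M "{x}"]
          setdist_subset_right[of M "closure (M - {x0})" "{x}"]
    by (fastforce simp: infdist_eq_setdist)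
qed

text \<open>Since \<open>d\<^sub>M(x) \<le> d(x, x\<^sub>0) < \<epsilon>/2\<close>, a minimizing sequence eventually lies in \<open>ball x\<^sub>0 \<epsilon>\<close>.\<close>
lemma infdist_minimizing_sequence_near_limpt:
  fixes x :: "'a::metric_space"
  assumes "x0 islimpt M" "x0 \<in> M" "dist x0 x < \<epsilon> / 2"
  obtains v where "\<And>n. v n \<in> M \<inter> ball x0 \<epsilon> - {x0}"
    "(\<lambda>n. dist x (v n)) \<longlonglongrightarrow> infdist x M"
proof -
  have "M - {x0} \<noteq> {}"
    using assms(1) by (metis closure_empty empty_iff islimpt_in_closure)
  then obtain w where w: "\<And>n. w n \<in> M - {x0}" "(\<lambda>n. dist x (w n)) \<longlonglongrightarrow> infdist x M"
    using infdist_minimizing_sequence[of "M - {x0}" x]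
    unfolding infdist_remove_limpt[OF assms(1)] by blast
  have "infdist x M < \<epsilon> / 2"
    using infdist_le[OF assms(2), of x] assms(3) by (simp add: dist_commute)
  then have "\<forall>\<^sub>F n in sequentially. dist x (w n) < \<epsilon> / 2"
    by (rule order_tendstoD(2)[OF w(2)])
  then obtain N where N: "\<And>n. n \<ge> N \<Longrightarrow> dist x (w n) < \<epsilon> / 2"
    unfolding eventually_sequentially by blast
  show thesis
  proof (rule that[of "\<lambda>n. w (n + N)"])
    fix n
    have "dist x0 (w (n + N)) < \<epsilon>"
      using dist_triangle[of x0 "w (n + N)" x] N[of "n + N"] assms(3) by simp
    then show "w (n + N) \<in> M \<inter> ball x0 \<epsilon> - {x0}"
      using w(1) by simp
  qed (rule LIMSEQ_ignore_initial_segment[OF w(2)])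
qed

lemma setplus_cone_dominated_trans:
  assumes "convex K" "cone K"
    and "(\<lambda>a. a + w) ` A \<subseteq> setplus B K" "\<forall>b\<in>B. b - y \<in> K"
  shows "\<forall>a\<in>A. a + w - y \<in> K"
proof
  fix a assume "a \<in> A"
  then obtain b k where "b \<in> B" "k \<in> K" "a + w = b + k"
    using assms(3) unfolding setplus_def by blast
  moreover have "(b - y) + k \<in> K"
    using assms(1,2,4) \<open>b \<in> B\<close> \<open>k \<in> K\<close> convex_cone by blast
  ultimately show "a + w - y \<in> K"
    by (simp add: algebra_simps)
qed

text \<open>Passing to the limit in \<open>A + w\<^sub>n \<subseteq> y\<^sub>n + K\<close>: the \<open>y\<^sub>n\<close> need not converge, but by
  \<open>K\<close>-sequential compactness some \<open>y\<^sub>n - c\<^sub>n\<close> with \<open>c\<^sub>n \<in> K\<close> do along a subsequence, and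
  \<open>A + w\<^sub>n \<subseteq> (y\<^sub>n - c\<^sub>n) + K\<close> still holds.\<close>
lemma K_seq_compact_dominated_limit:
  assumes "convex K" "cone K" "closed K" "K_seq_compact K B"
    and "\<And>n. y n \<in> B" "\<And>n. \<forall>a\<in>A. a + w n - y n \<in> K" "w \<longlonglongrightarrow> w0"
  shows "\<exists>y0\<in>B. \<forall>a\<in>A. a + w0 - y0 \<in> K"
proof -
  obtain c s y0 where c: "\<And>n. c n \<in> K" and s: "strict_mono s" and "y0 \<in> B"
    and lim: "(\<lambda>n. y (s n) - c (s n)) \<longlonglongrightarrow> y0"
    using assms(4,5) unfolding K_seq_compact_def by blast
  have "a + w0 - y0 \<in> K" if "a \<in> A" for a
  proof (rule closed_sequentially[OF assms(3)])
    have "(\<lambda>n. a + w (s n) - (y (s n) - c (s n))) \<longlonglongrightarrow> a + w0 - y0"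
      by (intro tendsto_intros LIMSEQ_subseq_LIMSEQ[OF assms(7) s, unfolded o_def] lim)
    then show "(\<lambda>n. (a + w (s n) - y (s n)) + c (s n)) \<longlonglongrightarrow> a + w0 - y0"
      by (simp add: algebra_simps)
    show "(a + w (s n) - y (s n)) + c (s n) \<in> K" for n
      using assms(1,2,6) c that convex_cone by blast
  qed
  with \<open>y0 \<in> B\<close> show ?thesis by blast
qed

lemma penalized_value_dominated:
  assumes "convex K" "cone K" "closed K" "x0 \<in> M" "x0 islimpt M" "K_seq_compact K (F x0)"
    and min: "\<And>v. v \<in> M \<inter> ball x0 \<epsilon> - {x0} \<Longrightarrow> \<exists>y\<in>F x0. \<forall>f\<in>F v. f - y \<in> K"
    and pen: "\<And>v. v \<in> M \<inter> ball x0 \<epsilon> \<Longrightarrow>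
                (\<lambda>y. y + (l * norm (x - v)) *\<^sub>R e) ` F x \<subseteq> setplus (F v) K"
    and "dist x0 x < \<epsilon> / 2"
  shows "\<exists>y\<in>F x0. \<forall>z\<in>F x. z + (l * infdist x M) *\<^sub>R e - y \<in> K"
proof -
  obtain v where v: "\<And>n. v n \<in> M \<inter> ball x0 \<epsilon> - {x0}"
    and lim: "(\<lambda>n. dist x (v n)) \<longlonglongrightarrow> infdist x M"
    using infdist_minimizing_sequence_near_limpt[OF assms(5,4,9)] by blast
  have "\<forall>n. \<exists>y\<in>F x0. \<forall>f\<in>F (v n). f - y \<in> K"
    using min v by blast
  then obtain y where y: "\<And>n. y n \<in> F x0" "\<And>n. \<forall>f\<in>F (v n). f - y n \<in> K"
    by metis
  have dom: "\<And>n. \<forall>z\<in>F x. z + (l * dist x (v n)) *\<^sub>R e - y n \<in> K"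
    using setplus_cone_dominated_trans[OF assms(1,2) pen y(2)] v by (simp add: dist_norm)
  have "(\<lambda>n. (l * dist x (v n)) *\<^sub>R e) \<longlonglongrightarrow> (l * infdist x M) *\<^sub>R e"
    by (intro tendsto_intros lim)
  then show ?thesis
    by (rule K_seq_compact_dominated_limit[OF assms(1-3,6) y(1) dom])
qed

theorem mainTheorem15:
  fixes K :: "'b::real_normed_vector set"
    and F :: "'a::real_normed_vector \<Rightarrow> 'b set"
    and M :: "'a set" and xbar :: 'a and e :: 'b and r l :: real
  assumes K: "pointed_closed_convex_cone K"
    and M_ne: "M \<noteq> {}"
    and F_ne: "\<And>x. F x \<noteq> {}"
    and xM: "xbar \<in> M" and xacc: "xbar islimpt M"
    and cpt: "K_seq_compact K (F xbar)"
    and lmin: "local_ideal_min K F M xbar"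
    and e: "e \<in> K - {0}" and r: "r > 0" and l: "l > 0"
    and pen: "\<And>u v. u \<in> (UNIV - M) \<inter> ball xbar r \<Longrightarrow> v \<in> M \<inter> ball xbar r \<Longrightarrow>
                 (\<lambda>y. y + (l * norm (u - v)) *\<^sub>R e) ` F u \<subseteq> setplus (F v) K"
  shows "local_ideal_min K (\<lambda>x. (\<lambda>y. y + (l * infdist x M) *\<^sub>R e) ` F x) UNIV xbar"
proof -
  have Kc: "convex K" "cone K" "closed K"
    using K unfolding pointed_closed_convex_cone_def by auto
  obtain \<epsilon>0 where "\<epsilon>0 > 0"
    and minM: "\<And>x. x \<in> M \<inter> ball xbar \<epsilon>0 - {xbar} \<Longrightarrow> \<exists>y\<in>F xbar. \<forall>f\<in>F x. f - y \<in> K"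
    using lmin unfolding local_ideal_min_iff by blast
  define \<epsilon> where "\<epsilon> = min r \<epsilon>0"
  have "\<epsilon> > 0"
    using r \<open>\<epsilon>0 > 0\<close> by (simp add: \<epsilon>_def)
  then have balls: "ball xbar (\<epsilon> / 2) \<subseteq> ball xbar \<epsilon>" "ball xbar \<epsilon> \<subseteq> ball xbar r \<inter> ball xbar \<epsilon>0"
    by (auto simp: \<epsilon>_def)
  have "\<exists>y\<in>F xbar. \<forall>z\<in>F x. z + (l * infdist x M) *\<^sub>R e - y \<in> K"
    if x: "x \<in> ball xbar (\<epsilon> / 2) - {xbar}" for x
  proof (cases "x \<in> M")
    case True
    with x balls have "x \<in> M \<inter> ball xbar \<epsilon>0 - {xbar}"
      by fast
    then show ?thesis
      using minM xM by simp
  next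
    case False
    from x balls have "x \<in> ball xbar r"
      by fast
    show ?thesis
    proof (rule penalized_value_dominated[where F = F and \<epsilon> = \<epsilon>, OF Kc xM xacc cpt])
      show "\<exists>y\<in>F xbar. \<forall>f\<in>F v. f - y \<in> K" if "v \<in> M \<inter> ball xbar \<epsilon> - {xbar}" for v
        using that balls(2) by (intro minM) blast
      show "(\<lambda>y. y + (l * norm (x - v)) *\<^sub>R e) ` F x \<subseteq> setplus (F v) K" if "v \<in> M \<inter> ball xbar \<epsilon>" for v
        using that False \<open>x \<in> ball xbar r\<close> balls(2) by (intro pen) blast+
      show "dist xbar x < \<epsilon> / 2"
        using x by simp
    qed
  qed
  then have "\<forall>x \<in> UNIV \<inter> ball xbar (\<epsilon> / 2) - {xbar}.
      \<exists>y\<in>(\<lambda>y. y + (l * infdist xbar M) *\<^sub>R e) ` F xbar.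
        \<forall>g\<in>(\<lambda>y. y + (l * infdist x M) *\<^sub>R e) ` F x. g - y \<in> K"
    using xM by simp
  moreover have "\<epsilon> / 2 > 0"
    using \<open>\<epsilon> > 0\<close> by simp
  ultimately show ?thesis
    unfolding local_ideal_min_iff by (intro conjI UNIV_I exI[of _ "\<epsilon> / 2"])
qed

end
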